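(* Let $k\ge 2$ and let $\mathcal{S}=\{\mathcal{S}_1,\ldots,\mathcal{S}_{q^k+1}\}$ be a $k$-spread of $\mathbb{F}_q^{2k}$. For each $i$ let $\mathrm{S}_i$ be a full-rank $k\times 2k$ matrix over $\mathbb{F}_q$ with row space $\mathcal{S}_i$. Define the $2k\times 2k$ matrices $\mathrm{W}_i=\begin{pmatrix}\mathrm{S}_i\\ \mathrm{S}_{i+1}\end{pmatrix}$ for $i=1,\ldots,q^k$ and $\mathrm{W}_{q^k+1}=\begin{pmatrix}\mathrm{S}_{q^k+1}\\ \mathrm{S}_1\end{pmatrix}$, and for $1\le j\le 2k-1$ let $\mathcal{W}_i^{(j)}$ be the row space of the first $j$ rows of $\mathrm{W}_i$. Then for every $1\le j\le 2k-1$ the set $\mathcal{C}_j=\{\mathcal{W}_i^{(j)} : i=1,\ldots,q^k+1\}$ is a set of $j$-dimensional subspaces of $\mathbb{F}_q^{2k}$ with $|\mathcal{C}_j|=|\mathcal{S}|$. Moreover: (1) for $1\le j\le k$, $\mathcal{C}_j$ is a partial spread, i.e. distinct elements intersect trivially; (2) for $k<j\le 2k-1$, any two distinct elements of $\mathcal{C}_j$ intersect in a subspace of dimension exactly $2(j-k)$, so that the subspace distance between any two distinct elements of $\mathcal{C}_j$ is $2(2k-j)$, the maximum possible distance between two $j$-dimensional subspaces of $\mathbb{F}_q^{2k}$.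
   Context: $q$ is a prime power. A $k$-spread of $\mathbb{F}_q^{2k}$ (planar spread) is a set of $k$-dimensional subspaces of $\mathbb{F}_q^{2k}$ pairwise intersecting trivially with cardinality $q^k+1$; any two distinct members then sum to $\mathbb{F}_q^{2k}$. The subspace distance is $d_S(\mathcal{U},\mathcal{V})=\dim(\mathcal{U}+\mathcal{V})-\dim(\mathcal{U}\cap\mathcal{V})$. *)

theory Defs
  imports "HOL-Analysis.Analysis"
begin

text \<open>Vectors of F_q^{2k} are elements of 'a^'n with 'a a finite field and CARD('n) = 2k.
  Subspaces are sets of vectors; dimension is the library's vec.dim.\<close>

definition subspace_dist :: "('a::field ^ 'n) set \<Rightarrow> ('a ^ 'n) set \<Rightarrow> nat" where
  "subspace_dist U V = vec.dim (vec.span (U \<union> V)) - vec.dim (U \<inter> V)"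

definition k_spread :: "nat \<Rightarrow> ('a::{field,finite} ^ 'n) set set \<Rightarrow> bool" where
  "k_spread k SS \<longleftrightarrow> finite SS \<and> card SS = CARD('a) ^ k + 1 \<and>
     (\<forall>U\<in>SS. vec.subspace U \<and> vec.dim U = k) \<and>
     (\<forall>U\<in>SS. \<forall>V\<in>SS. U \<noteq> V \<longrightarrow> U \<inter> V = {0})"

text \<open>Rows of W_i (0-based indices): the k rows of S_i followed by the k rows of S_{i+1},
  indices of the spread taken cyclically modulo N = q^k+1.\<close>
definition W_row :: "nat \<Rightarrow> nat \<Rightarrow> (nat \<Rightarrow> nat \<Rightarrow> 'v) \<Rightarrow> nat \<Rightarrow> nat \<Rightarrow> 'v" where
  "W_row k N M i r = (if r < k then M i r else M (Suc i mod N) (r - k))"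

definition W_sub :: "nat \<Rightarrow> nat \<Rightarrow> (nat \<Rightarrow> nat \<Rightarrow> 'a::field ^ 'n) \<Rightarrow> nat \<Rightarrow> nat \<Rightarrow> ('a ^ 'n) set" where
  "W_sub k N M i j = vec.span (W_row k N M i ` {..<j})"

end

theory Submission
  imports Defs
begin

text \<open>For \<open>j \<le> k\<close> the first \<open>j\<close> rows of \<open>W\<^sub>i\<close> span a subspace of \<open>S\<^sub>i\<close>, so
  distinct members of \<open>C\<^sub>j\<close> meet trivially. For \<open>j > k\<close> the row space contains \<open>S\<^sub>i\<close>,
  and \<open>S\<^sub>i + S\<^sub>l\<close> is the whole space for \<open>i \<noteq> l\<close>; hence two distinct members of \<open>C\<^sub>j\<close>
  span the whole \<open>2k\<close>-dimensional space and the Grassmann formula gives an intersection of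
  dimension \<open>2j - 2k\<close>. The row space has dimension \<open>j\<close> because \<open>S\<^sub>i\<close> meets \<open>S\<^sub>i\<^sub>+\<^sub>1\<close>
  trivially.\<close>

lemma dim_span_Un_add_dim_Int:
  fixes U V :: "('a::field ^ 'n) set"
  assumes "vec.subspace U" "vec.subspace V"
  shows "vec.dim (vec.span (U \<union> V)) + vec.dim (U \<inter> V) = vec.dim U + vec.dim V"
proof -
  have "vec.span U = U" "vec.span V = V"
    using assms by simp_all
  then have "vec.span (U \<union> V) = {x + y |x y. x \<in> U \<and> y \<in> V}"
    using vec.span_Un[of U V] by (simp del: vec.span_eq_iff)
  then show ?thesis
    using vec.dim_sums_Int[OF assms] by simp
qed

lemma dim_span_Un_direct:
  fixes U V :: "('a::field ^ 'n) set"
  assumes "vec.subspace U" "vec.subspace V" "U \<inter> V = {0}"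
  shows "vec.dim (vec.span (U \<union> V)) = vec.dim U + vec.dim V"
  using dim_span_Un_add_dim_Int[OF assms(1,2)] assms(3) by simp

lemma dim_span_Un_eq_CARD:
  fixes A B U V :: "('a::field ^ 'n) set"
  assumes "vec.subspace A" "vec.subspace B" "A \<inter> B = {0}"
    and "vec.dim A + vec.dim B = CARD('n)" and "A \<subseteq> U" "B \<subseteq> V"
  shows "vec.dim (vec.span (U \<union> V)) = CARD('n)"
proof -
  have "CARD('n) = vec.dim (vec.span (A \<union> B))"
    using dim_span_Un_direct[OF assms(1-3)] assms(4) by simp
  also have "\<dots> \<le> vec.dim (vec.span (U \<union> V))"
    using assms(5,6) by (intro vec.dim_subset vec.span_mono) blast
  finally show ?thesis
    using dim_subset_UNIV_cart_gen[of "vec.span (U \<union> V)"] by linarith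
qed

lemma subspace_dist_equidim:
  fixes U V :: "('a::field ^ 'n) set"
  assumes "vec.subspace U" "vec.subspace V" "vec.dim U = j" "vec.dim V = j"
  shows "subspace_dist U V = 2 * (vec.dim (vec.span (U \<union> V)) - j)"
  using dim_span_Un_add_dim_Int[OF assms(1,2)] assms(3,4) unfolding subspace_dist_def by simp

lemma subspace_dist_le:
  fixes U V :: "('a::field ^ 'n) set"
  assumes "vec.subspace U" "vec.subspace V" "vec.dim U = j" "vec.dim V = j"
  shows "subspace_dist U V \<le> 2 * (CARD('n) - j)"
  using subspace_dist_equidim[OF assms] dim_subset_UNIV_cart_gen[of "vec.span (U \<union> V)"] by simp

lemma dim_span_image_lessThan:
  fixes f :: "nat \<Rightarrow> 'a::field ^ 'n"
  assumes rank: "vec.dim (vec.span (f ` {..<k})) = k" and "j \<le> k"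
  shows "vec.dim (vec.span (f ` {..<j})) = j"
proof -
  let ?X = "f ` {..<k}"
  have "k \<le> card ?X"
    using rank vec.dim_le_card[OF vec.span_superset[of ?X]] by simp
  then have card: "card ?X = k"
    using card_image_le[of "{..<k}" f] by simp
  then have inj: "inj_on f {..<k}"
    by (intro eq_card_imp_inj_on) auto
  have indep: "vec.independent ?X"
    using card rank by (intro vec.card_le_dim_spanning[of _ "vec.span ?X"]) (auto intro: vec.span_base)
  have sub: "{..<j} \<subseteq> {..<k}"
    using \<open>j \<le> k\<close> by auto
  have "vec.independent (f ` {..<j})"
    using vec.independent_mono[OF indep image_mono[OF sub]] .
  moreover have "card (f ` {..<j}) = j"
    using card_image[OF inj_on_subset[OF inj sub]] by simp
  ultimately show ?thesis
    by (simp add: vec.dim_eq_card_independent)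
qed

lemma W_row_image:
  assumes "k \<le> j"
  shows "W_row k N M i ` {..<j} = M i ` {..<k} \<union> M (Suc i mod N) ` {..<j - k}"
proof -
  have "{..<j} = {..<k} \<union> {k..<j}"
    using assms by auto
  also have "{k..<j} = (\<lambda>r. r + k) ` {..<j - k}"
    using assms by (simp add: lessThan_atLeast0)
  finally have "W_row k N M i ` {..<j}
      = W_row k N M i ` {..<k} \<union> (W_row k N M i \<circ> (\<lambda>r. r + k)) ` {..<j - k}"
    by (simp add: image_Un image_comp)
  also have "\<dots> = M i ` {..<k} \<union> M (Suc i mod N) ` {..<j - k}"
    by (intro arg_cong2[where f = "(\<union>)"] image_cong) (auto simp: W_row_def)
  finally show ?thesis .
qed

lemma W_sub_le:
  "j \<le> k \<Longrightarrow> W_sub k N M i j = vec.span (M i ` {..<j})"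
  unfolding W_sub_def W_row_def by (intro arg_cong[where f = vec.span] image_cong) auto

lemma W_sub_ge:
  "k \<le> j \<Longrightarrow>
    W_sub k N M i j = vec.span (vec.span (M i ` {..<k}) \<union> vec.span (M (Suc i mod N) ` {..<j - k}))"
  unfolding W_sub_def by (simp add: W_row_image vec.span_Un vec.span_span)

locale spread_row_matrices =
  fixes k N :: nat
    and Sp :: "nat \<Rightarrow> ('a::field ^ 'n) set"
    and M :: "nat \<Rightarrow> nat \<Rightarrow> 'a ^ 'n"
  assumes ambient_dim: "CARD('n) = 2 * k"
    and two_le_N: "2 \<le> N"
    and subspace_Sp: "i < N \<Longrightarrow> vec.subspace (Sp i)"
    and dim_Sp: "i < N \<Longrightarrow> vec.dim (Sp i) = k"
    and Sp_Int: "i < N \<Longrightarrow> l < N \<Longrightarrow> i \<noteq> l \<Longrightarrow> Sp i \<inter> Sp l = {0}"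
    and span_rows: "i < N \<Longrightarrow> vec.span (M i ` {..<k}) = Sp i"
begin

abbreviation W :: "nat \<Rightarrow> nat \<Rightarrow> ('a ^ 'n) set" where
  "W i j \<equiv> W_sub k N M i j"

lemma next_index:
  assumes "i < N"
  shows "Suc i mod N < N" "Suc i mod N \<noteq> i"
proof -
  show "Suc i mod N < N"
    using assms by simp
  show "Suc i mod N \<noteq> i"
  proof (cases "Suc i < N")
    case False
    then have "Suc i = N" using assms by simp
    then show ?thesis using two_le_N by simp
  qed simp
qed

lemma subspace_W: "vec.subspace (W i j)"
  unfolding W_sub_def by simp

lemma dim_span_rows_prefix: "i < N \<Longrightarrow> j \<le> k \<Longrightarrow> vec.dim (vec.span (M i ` {..<j})) = j"
  using dim_span_image_lessThan[of "M i" k j] span_rows dim_Sp by simp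

lemma span_rows_prefix_subset_Sp: "i < N \<Longrightarrow> j \<le> k \<Longrightarrow> vec.span (M i ` {..<j}) \<subseteq> Sp i"
  using span_rows vec.span_mono[of "M i ` {..<j}" "M i ` {..<k}"] by fastforce

lemma W_eq_span_Sp_Un:
  "i < N \<Longrightarrow> k \<le> j \<Longrightarrow> W i j = vec.span (Sp i \<union> vec.span (M (Suc i mod N) ` {..<j - k}))"
  using W_sub_ge[of k j N M i] span_rows by simp

lemma dim_W:
  assumes "i < N" "j \<le> 2 * k"
  shows "vec.dim (W i j) = j"
proof (cases "j \<le> k")
  case True
  then show ?thesis using W_sub_le[of j k N M i] dim_span_rows_prefix assms(1) by simp
next
  case False
  let ?i' = "Suc i mod N"
  let ?T = "vec.span (M ?i' ` {..<j - k})"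
  have i': "?i' < N" "?i' \<noteq> i"
    using next_index assms(1) by simp_all
  have "j - k \<le> k"
    using assms(2) by simp
  then have T: "vec.dim ?T = j - k" "?T \<subseteq> Sp ?i'"
    using dim_span_rows_prefix[OF i'(1)] span_rows_prefix_subset_Sp[OF i'(1)] by simp_all
  have "Sp i \<inter> ?T \<subseteq> Sp i \<inter> Sp ?i'"
    using T(2) by blast
  then have "Sp i \<inter> ?T = {0}"
    using Sp_Int[OF assms(1) i'(1) i'(2)[symmetric]] subspace_Sp[OF assms(1)] vec.span_zero
    by (auto simp: vec.subspace_0)
  then have "vec.dim (vec.span (Sp i \<union> ?T)) = k + (j - k)"
    using dim_span_Un_direct[OF subspace_Sp[OF assms(1)] vec.subspace_span] dim_Sp[OF assms(1)] T(1)
    by simp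
  then show ?thesis
    using W_eq_span_Sp_Un[OF assms(1)] False by simp
qed

lemma W_Int_low:
  assumes "j \<le> k" "i < N" "l < N" "i \<noteq> l"
  shows "W i j \<inter> W l j = {0}"
proof -
  have "W i j \<inter> W l j \<subseteq> Sp i \<inter> Sp l"
    using span_rows_prefix_subset_Sp[OF assms(2,1)] span_rows_prefix_subset_Sp[OF assms(3,1)]
    unfolding W_sub_le[OF assms(1)] by blast
  moreover have "0 \<in> W i j \<inter> W l j"
    using subspace_W vec.subspace_0 by blast
  ultimately show ?thesis
    using Sp_Int[OF assms(2-4)] by blast
qed

lemma Sp_subset_W: "i < N \<Longrightarrow> k \<le> j \<Longrightarrow> Sp i \<subseteq> W i j"
  using W_eq_span_Sp_Un vec.span_superset by blast

lemma dim_span_W_Un_high: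
  assumes "k \<le> j" "i < N" "l < N" "i \<noteq> l"
  shows "vec.dim (vec.span (W i j \<union> W l j)) = 2 * k"
proof -
  have "vec.dim (vec.span (W i j \<union> W l j)) = CARD('n)"
  proof (rule dim_span_Un_eq_CARD)
    show "vec.subspace (Sp i)" "vec.subspace (Sp l)" "Sp i \<inter> Sp l = {0}"
      using subspace_Sp Sp_Int assms by simp_all
    show "vec.dim (Sp i) + vec.dim (Sp l) = CARD('n)"
      using dim_Sp ambient_dim assms by simp
    show "Sp i \<subseteq> W i j" "Sp l \<subseteq> W l j"
      using Sp_subset_W assms by simp_all
  qed
  then show ?thesis
    using ambient_dim by simp
qed

lemma W_Int_high:
  assumes "k \<le> j" "j \<le> 2 * k" "i < N" "l < N" "i \<noteq> l"
  shows "vec.dim (W i j \<inter> W l j) = 2 * (j - k)"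
    and "subspace_dist (W i j) (W l j) = 2 * (2 * k - j)"
proof -
  have dims: "vec.dim (W i j) = j" "vec.dim (W l j) = j"
    using dim_W assms by simp_all
  have span: "vec.dim (vec.span (W i j \<union> W l j)) = 2 * k"
    using dim_span_W_Un_high assms by simp
  show "vec.dim (W i j \<inter> W l j) = 2 * (j - k)"
    using dim_span_Un_add_dim_Int[OF subspace_W subspace_W, of i j l j] span dims by simp
  show "subspace_dist (W i j) (W l j) = 2 * (2 * k - j)"
    using subspace_dist_equidim[OF subspace_W subspace_W dims] span by simp
qed

lemma inj_on_W:
  assumes "1 \<le> j" "j < 2 * k"
  shows "inj_on (\<lambda>i. W i j) {..<N}"
proof (rule inj_onI, rule ccontr)
  fix i l
  assume i: "i \<in> {..<N}" and l: "l \<in> {..<N}" and eq: "W i j = W l j" and "i \<noteq> l"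
  have dim: "vec.dim (W i j) = j"
    using dim_W i assms(2) by simp
  show False
  proof (cases "j \<le> k")
    case True
    then have "W i j = {0}"
      using W_Int_low[of j i l] i l eq \<open>i \<noteq> l\<close> by simp
    then show False
      using dim assms(1) by simp
  next
    case False
    then have "vec.dim (vec.span (W i j)) = 2 * k"
      using dim_span_W_Un_high[of j i l] i l eq \<open>i \<noteq> l\<close> by simp
    then show False
      using dim assms(2) by simp
  qed
qed

end

lemma spread_row_matrices_k_spread:
  fixes SS :: "('a::{field,finite} ^ 'n) set set"
  assumes "CARD('n) = 2 * k" and spread: "k_spread k SS" and "N = CARD('a) ^ k + 1"
    and enum: "bij_betw Sp {..<N} SS" and "\<forall>i<N. vec.span (M i ` {..<k}) = Sp i"
  shows "spread_row_matrices k N Sp M"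
proof
  have SS: "\<And>U. U \<in> SS \<Longrightarrow> vec.subspace U \<and> vec.dim U = k"
    "\<And>U V. U \<in> SS \<Longrightarrow> V \<in> SS \<Longrightarrow> U \<noteq> V \<Longrightarrow> U \<inter> V = {0}"
    using spread unfolding k_spread_def by blast+
  show "CARD('n) = 2 * k" "2 \<le> N"
    using assms(1,3) by simp_all
  show "vec.subspace (Sp i)" "vec.dim (Sp i) = k" if "i < N" for i
    using SS(1) bij_betw_apply[OF enum] that by simp_all
  show "Sp i \<inter> Sp l = {0}" if "i < N" "l < N" "i \<noteq> l" for i l
    using SS(2) bij_betw_apply[OF enum] bij_betw_imp_inj_on[OF enum] that by (simp add: inj_on_eq_iff)
  show "vec.span (M i ` {..<k}) = Sp i" if "i < N" for i
    using assms(5) that by simp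
qed

theorem proposition4p3:
  fixes SS :: "('a::{field,finite} ^ 'n) set set"
    and Sp :: "nat \<Rightarrow> ('a ^ 'n) set"
    and M :: "nat \<Rightarrow> nat \<Rightarrow> 'a ^ 'n"
    and k N :: nat
  assumes k2: "k \<ge> 2"
    and dimn: "CARD('n) = 2 * k"
    and spread: "k_spread k SS"
    and N_def: "N = CARD('a) ^ k + 1"
    and enum: "bij_betw Sp {..<N} SS"
    and rank: "\<forall>i<N. vec.dim (vec.span (M i ` {..<k})) = k"
    and rowsp: "\<forall>i<N. vec.span (M i ` {..<k}) = Sp i"
  shows "\<forall>j\<in>{1..2*k-1}.
           (\<forall>i<N. vec.subspace (W_sub k N M i j) \<and> vec.dim (W_sub k N M i j) = j)
         \<and> card ((\<lambda>i. W_sub k N M i j) ` {..<N}) = card SS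
         \<and> (j \<le> k \<longrightarrow>
              (\<forall>U\<in>(\<lambda>i. W_sub k N M i j) ` {..<N}. \<forall>V\<in>(\<lambda>i. W_sub k N M i j) ` {..<N}.
                 U \<noteq> V \<longrightarrow> U \<inter> V = {0}))
         \<and> (k < j \<longrightarrow>
              (\<forall>U\<in>(\<lambda>i. W_sub k N M i j) ` {..<N}. \<forall>V\<in>(\<lambda>i. W_sub k N M i j) ` {..<N}.
                 U \<noteq> V \<longrightarrow> vec.dim (U \<inter> V) = 2 * (j - k)
                        \<and> subspace_dist U V = 2 * (2 * k - j))
            \<and> (\<forall>U V :: ('a ^ 'n) set. vec.subspace U \<and> vec.dim U = j \<and> vec.subspace V \<and> vec.dim V = j
                 \<longrightarrow> subspace_dist U V \<le> 2 * (2 * k - j)))"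
proof -
  interpret spread_row_matrices k N Sp M
    using spread_row_matrices_k_spread[OF dimn spread N_def enum rowsp] .
  show ?thesis
  proof (rule ballI, intro conjI impI)
    fix j assume j: "j \<in> {1..2 * k - 1}"
    then have j_bounds: "1 \<le> j" "j < 2 * k"
      by auto
    then show "\<forall>i<N. vec.subspace (W i j) \<and> vec.dim (W i j) = j"
      by (simp add: subspace_W dim_W)
    show "card ((\<lambda>i. W i j) ` {..<N}) = card SS"
      using card_image[OF inj_on_W[OF j_bounds]] bij_betw_same_card[OF enum] by simp
    show "\<forall>U\<in>(\<lambda>i. W i j) ` {..<N}. \<forall>V\<in>(\<lambda>i. W i j) ` {..<N}. U \<noteq> V \<longrightarrow> U \<inter> V = {0}"
      if "j \<le> k"
      using W_Int_low that by simp (metis lessThan_iff)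
    show "\<forall>U\<in>(\<lambda>i. W i j) ` {..<N}. \<forall>V\<in>(\<lambda>i. W i j) ` {..<N}. U \<noteq> V \<longrightarrow>
        vec.dim (U \<inter> V) = 2 * (j - k) \<and> subspace_dist U V = 2 * (2 * k - j)"
      if "k < j"
      using W_Int_high that j_bounds by simp (metis lessThan_iff less_imp_le)
    show "\<forall>U V :: ('a ^ 'n) set. vec.subspace U \<and> vec.dim U = j \<and> vec.subspace V \<and> vec.dim V = j
        \<longrightarrow> subspace_dist U V \<le> 2 * (2 * k - j)"
      if "k < j"
      using subspace_dist_le dimn by metis
  qed
qed

end
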